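(* Let $\{(X_i,Y_i)\}_{i=1}^n$ be i.i.d. from a distribution $P$ and let the test point $(X_{n+1},Y_{n+1})$ be drawn from a distribution $Q$ independently of the labeled data, where $\mathrm{d}Q/\mathrm{d}P(x,y) = w(x)$ for a known weight function $w\colon \mathcal{X}\to \mathbb{R}^+$. Let $f$ be a model and $s\colon\mathcal{X}\to\mathbb{R}$ a score function, both fixed (trained independently of these data), and let $L_i = \mathcal{L}(f,X_i,Y_i)\in[0,1]$ for a known risk mapping $\mathcal{L}$, for $i\in[n+1]$. Write $w_i = w(X_i)$ for $i\in[n+1]$ and $\mathcal{M} = \{s(X_i)\}_{i=1}^{n+1}$. For $\ell\in[0,1]$ and $t\in\mathbb{R}$ define $$\mathrm{F}(t;\ell) = \frac{\sum_{i=1}^n w_i L_i \mathbf{1}\{s(X_i)\le t\} + w_{n+1}\,\ell\, \mathbf{1}\{s(X_{n+1})\le t\}}{\sum_{i=1}^{n+1} w_i},\qquad t_\gamma(\ell) = \max\{t\in\mathcal{M}\colon \mathrm{F}(t;\ell)\le\gamma\},$$ with $\max\emptyset = -\infty$, and define the weighted e-value $$E_{\gamma,n+1} = \inf_{\ell\in[0,1]} \left\{ \frac{\mathbf{1}\{s(X_{n+1})\le t_\gamma(\ell)\}\cdot \sum_{i=1}^{n+1} w_i}{\sum_{i=1}^n w_i L_i \mathbf{1}\{s(X_i)\le t_\gamma(\ell)\} + w_{n+1}\,\ell\,\mathbf{1}\{s(X_{n+1})\le t_\gamma(\ell)\}}\right\},$$ with $E_{\gamma,n+1}=0$ when $\inf_{\ell\in[0,1]}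 t_\gamma(\ell) = -\infty$. Then for any fixed constant $\gamma\in(0,1)$, it holds that $\mathbb{E}_Q[L_{n+1}E_{\gamma,n+1}]\le 1$.
   Context: Covariate-shift setting: calibration data i.i.d. from $P$, test data from $Q$ with $\mathrm{d}Q/\mathrm{d}P(x,y)=w(x)$ known. The weighted e-value is used for marginal deployment risk control via the decision $\hat\psi_{n+1}=\mathbf{1}\{E_{\gamma,n+1}\ge 1/\alpha\}$, so that the validity $\mathbb{E}_Q[L_{n+1}E_{\gamma,n+1}]\le 1$ yields $\mathbb{E}_Q[L_{n+1}\hat\psi_{n+1}]\le\alpha$. *)

theory Defs
  imports "HOL-Probability.Probability"
begin

text \<open>Data are indexed 1..n (calibration) and n+1 (test).
  ws i = w(X_i), Ls i = L_i, Ss i = s(X_i).\<close>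

definition wF :: "nat \<Rightarrow> (nat \<Rightarrow> real) \<Rightarrow> (nat \<Rightarrow> real) \<Rightarrow> (nat \<Rightarrow> real) \<Rightarrow> real \<Rightarrow> real \<Rightarrow> real" where
  "wF n ws Ls Ss t l =
     ((\<Sum>i=1..n. ws i * Ls i * (if Ss i \<le> t then 1 else 0))
       + ws (n+1) * l * (if Ss (n+1) \<le> t then 1 else 0))
     / (\<Sum>i=1..n+1. ws i)"

definition t_gamma :: "nat \<Rightarrow> (nat \<Rightarrow> real) \<Rightarrow> (nat \<Rightarrow> real) \<Rightarrow> (nat \<Rightarrow> real) \<Rightarrow> real \<Rightarrow> real \<Rightarrow> ereal" where
  "t_gamma n ws Ls Ss \<gamma> l =
     Sup (ereal ` {t \<in> Ss ` {1..n+1}. wF n ws Ls Ss t l \<le> \<gamma>})"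

text \<open>The ratio inside the infimum (extended reals: positive / 0 = infinity, 0 / 0 = 0).\<close>
definition e_ratio :: "nat \<Rightarrow> (nat \<Rightarrow> real) \<Rightarrow> (nat \<Rightarrow> real) \<Rightarrow> (nat \<Rightarrow> real) \<Rightarrow> real \<Rightarrow> real \<Rightarrow> ereal" where
  "e_ratio n ws Ls Ss \<gamma> l =
     (let T = t_gamma n ws Ls Ss \<gamma> l;
          ind = (\<lambda>i. if ereal (Ss i) \<le> T then (1::real) else 0)
      in ereal (ind (n+1) * (\<Sum>i=1..n+1. ws i)) /
         ereal ((\<Sum>i=1..n. ws i * Ls i * ind i) + ws (n+1) * l * ind (n+1)))"

definition weighted_evalue :: "nat \<Rightarrow> (nat \<Rightarrow> real) \<Rightarrow> (nat \<Rightarrow> real) \<Rightarrow> (nat \<Rightarrow> real) \<Rightarrow> real \<Rightarrow> ereal" where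
  "weighted_evalue n ws Ls Ss \<gamma> =
     (if (INF l\<in>{0..1}. t_gamma n ws Ls Ss \<gamma> l) = -\<infinity> then 0
      else (INF l\<in>{0..1}. e_ratio n ws Ls Ss \<gamma> l))"

definition evalue_data ::
  "('x \<Rightarrow> real) \<Rightarrow> ('x \<Rightarrow> real) \<Rightarrow> ('x \<Rightarrow> 'y \<Rightarrow> real) \<Rightarrow> nat \<Rightarrow> real \<Rightarrow> (nat \<Rightarrow> 'x \<times> 'y) \<Rightarrow> ereal" where
  "evalue_data w s Lf n \<gamma> z =
     weighted_evalue n (\<lambda>i. w (fst (z i))) (\<lambda>i. Lf (fst (z i)) (snd (z i))) (\<lambda>i. s (fst (z i))) \<gamma>"

end

theory Submission
  imports Defs
begin

text \<open>
  Put the true test loss L_{n+1} in place of \<open>\<ell>\<close>. The resulting oracle threshold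
  T = t_gamma(L_{n+1}), the total weight W = \<Sum>_i w_i and the selected mass
  D = \<Sum>_i w_i L_i 1{S_i \<le> T} are symmetric functions of the n+1 data points, so the
  shares h_j = w_j L_j 1{S_j \<le> T} W / D are exchangeable under P^{n+1}, and \<Sum>_j h_j \<le> W.
  Since L_{n+1} \<in> [0,1] is a candidate in the infimum, L_{n+1} E is at most L_{n+1} times the
  oracle e-value, and after the change of measure from Q to P in the last coordinate this
  becomes h_{n+1}. Hence E_Q[L_{n+1} E] \<le> E_P[h_{n+1}] = E_P[\<Sum>_j h_j] / (n+1) \<le> E_P[W] / (n+1) = 1.
\<close>

lemma indicator_PiE_eq_prod:
  assumes "finite I" "z \<in> extensional I"
  shows "indicator (PiE I A) z = (\<Prod>i\<in>I. indicator (A i) (z i) :: ennreal)"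
proof (cases "z \<in> PiE I A")
  case True
  then show ?thesis by (auto simp: indicator_def PiE_def intro!: prod.neutral)
next
  case False
  then obtain i where "i \<in> I" "z i \<notin> A i"
    using assms(2) by (auto simp: PiE_def Pi_def)
  then show ?thesis
    using False assms(1) by (auto intro!: prod_zero bexI[of _ i])
qed

lemma PiM_density:
  assumes "finite I"
    and "product_sigma_finite M" "product_sigma_finite (\<lambda>i. density (M i) (g i))"
    and g: "\<And>i. i \<in> I \<Longrightarrow> g i \<in> borel_measurable (M i)"
  shows "PiM I (\<lambda>i. density (M i) (g i)) = density (PiM I M) (\<lambda>z. \<Prod>i\<in>I. g i (z i))"
proof -
  interpret M: product_sigma_finite M by fact
  interpret D: product_sigma_finite "\<lambda>i. density (M i) (g i)" by fact
  have [measurable]: "(\<lambda>z. \<Prod>i\<in>I. g i (z i)) \<in> borel_measurable (PiM I M)"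
    using g by measurable
  show ?thesis
  proof (rule D.PiM_eqI[symmetric])
    show "sets (density (PiM I M) (\<lambda>z. \<Prod>i\<in>I. g i (z i))) = sets (PiM I (\<lambda>i. density (M i) (g i)))"
      by (auto intro!: sets_PiM_cong)
  next
    fix A assume A: "\<And>i. i \<in> I \<Longrightarrow> A i \<in> sets (density (M i) (g i))"
    then have A': "\<And>i. i \<in> I \<Longrightarrow> A i \<in> sets (M i)" by simp
    have "emeasure (density (PiM I M) (\<lambda>z. \<Prod>i\<in>I. g i (z i))) (PiE I A)
        = (\<integral>\<^sup>+ z. (\<Prod>i\<in>I. g i (z i)) * indicator (PiE I A) z \<partial>PiM I M)"
      using A' by (intro emeasure_density) (auto intro!: sets_PiM_I_finite \<open>finite I\<close>)
    also have "\<dots> = (\<integral>\<^sup>+ z. (\<Prod>i\<in>I. g i (z i) * indicator (A i) (z i)) \<partial>PiM I M)"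
    proof (intro nn_integral_cong)
      fix z assume "z \<in> space (PiM I M)"
      then have "z \<in> extensional I" by (simp add: space_PiM PiE_iff)
      then show "(\<Prod>i\<in>I. g i (z i)) * indicator (PiE I A) z = (\<Prod>i\<in>I. g i (z i) * indicator (A i) (z i))"
        by (simp add: prod.distrib indicator_PiE_eq_prod[OF \<open>finite I\<close>])
    qed
    also have "\<dots> = (\<Prod>i\<in>I. \<integral>\<^sup>+ x. g i x * indicator (A i) x \<partial>M i)"
      using A' g by (intro M.product_nn_integral_prod \<open>finite I\<close>) auto
    also have "\<dots> = (\<Prod>i\<in>I. emeasure (density (M i) (g i)) (A i))"
      using A' g by (intro prod.cong refl) (simp add: emeasure_density)
    finally show "emeasure (density (PiM I M) (\<lambda>z. \<Prod>i\<in>I. g i (z i))) (PiE I A)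
        = (\<Prod>i\<in>I. emeasure (density (M i) (g i)) (A i))" .
  qed fact
qed

lemma PiM_density_component:
  assumes "finite I" "k \<in> I" "prob_space M" "prob_space (density M g)"
    and "g \<in> borel_measurable M"
  shows "PiM I (\<lambda>i. if i = k then density M g else M) = density (PiM I (\<lambda>_. M)) (\<lambda>z. g (z k))"
proof -
  define g' where "g' i x = (if i = k then g x else 1)" for i x
  have g': "g' k = g" "\<And>i. i \<noteq> k \<Longrightarrow> g' i = (\<lambda>_. 1)"
    by (auto simp: g'_def fun_eq_iff)
  then have eq: "(\<lambda>i. if i = k then density M g else M) = (\<lambda>i. density M (g' i))"
    by (auto simp: density_1)
  have g'_meas: "g' i \<in> borel_measurable M" for i
    using assms(5) g' by (cases "i = k") simp_all
  have "product_sigma_finite (\<lambda>i. density M (g' i))"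
    unfolding eq[symmetric] product_sigma_finite_def
    using assms(3,4) by (auto intro: prob_space_imp_sigma_finite)
  moreover have "product_sigma_finite (\<lambda>_. M)"
    using assms(3) by (auto simp: product_sigma_finite_def intro: prob_space_imp_sigma_finite)
  ultimately have "PiM I (\<lambda>i. density M (g' i)) = density (PiM I (\<lambda>_. M)) (\<lambda>z. \<Prod>i\<in>I. g' i (z i))"
    using assms(1) g'_meas by (intro PiM_density)
  moreover have "(\<Prod>i\<in>I. g' i (z i)) = g (z k)" for z
    using assms(1,2) by (simp add: g'_def prod.delta)
  ultimately show ?thesis
    by (simp add: eq)
qed

lemma nn_integral_PiM_component:
  assumes "prob_space M" "i \<in> I" "f \<in> borel_measurable M"
  shows "(\<integral>\<^sup>+ z. f (z i) \<partial>PiM I (\<lambda>_. M)) = (\<integral>\<^sup>+ x. f x \<partial>M)"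
proof -
  have "(\<integral>\<^sup>+ z. f (z i) \<partial>PiM I (\<lambda>_. M)) = (\<integral>\<^sup>+ x. f x \<partial>distr (PiM I (\<lambda>_. M)) M (\<lambda>z. z i))"
    using assms by (intro nn_integral_distr[symmetric]) auto
  also have "distr (PiM I (\<lambda>_. M)) M (\<lambda>z. z i) = M"
    using distr_PiM_component[of I "\<lambda>_. M" i] assms by simp
  finally show ?thesis .
qed

lemma nn_integral_PiM_sum_component:
  assumes "prob_space M" "finite I" "f \<in> borel_measurable M"
  shows "(\<integral>\<^sup>+ z. (\<Sum>i\<in>I. f (z i)) \<partial>PiM I (\<lambda>_. M)) = of_nat (card I) * (\<integral>\<^sup>+ x. f x \<partial>M)"
proof -
  have "(\<integral>\<^sup>+ z. (\<Sum>i\<in>I. f (z i)) \<partial>PiM I (\<lambda>_. M)) = (\<Sum>i\<in>I. \<integral>\<^sup>+ z. f (z i) \<partial>PiM I (\<lambda>_. M))"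
    using assms(3) by (intro nn_integral_sum) auto
  also have "\<dots> = (\<Sum>i\<in>I. \<integral>\<^sup>+ x. f x \<partial>M)"
    using assms by (intro sum.cong refl nn_integral_PiM_component)
  finally show ?thesis by simp
qed

lemma nn_integral_PiM_reindex:
  assumes "prob_space M" "bij_betw \<sigma> I I" "f \<in> borel_measurable (PiM I (\<lambda>_. M))"
  shows "(\<integral>\<^sup>+ z. f (\<lambda>i\<in>I. z (\<sigma> i)) \<partial>PiM I (\<lambda>_. M)) = (\<integral>\<^sup>+ z. f z \<partial>PiM I (\<lambda>_. M))"
proof -
  have \<sigma>: "inj_on \<sigma> I" "\<sigma> \<in> I \<rightarrow> I"
    using assms(2) by (auto simp: bij_betw_def)
  have meas: "(\<lambda>z. \<lambda>i\<in>I. z (\<sigma> i)) \<in> PiM I (\<lambda>_. M) \<rightarrow>\<^sub>M PiM I (\<lambda>_. M)"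
    using \<sigma>(2) by (intro measurable_restrict measurable_component_singleton) auto
  have "(\<integral>\<^sup>+ z. f (\<lambda>i\<in>I. z (\<sigma> i)) \<partial>PiM I (\<lambda>_. M))
      = (\<integral>\<^sup>+ z. f z \<partial>distr (PiM I (\<lambda>_. M)) (PiM I (\<lambda>_. M)) (\<lambda>z. \<lambda>i\<in>I. z (\<sigma> i)))"
    by (rule nn_integral_distr[symmetric, OF meas]) (simp add: assms(3))
  also have "distr (PiM I (\<lambda>_. M)) (PiM I (\<lambda>_. M)) (\<lambda>z. \<lambda>i\<in>I. z (\<sigma> i)) = PiM I (\<lambda>_. M)"
    using distr_PiM_reindex[of I "\<lambda>_. M" \<sigma> I] assms(1) \<sigma> by simp
  finally show ?thesis .
qed

lemma nn_integral_PiM_sum_equivariant: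
  fixes h :: "'i \<Rightarrow> ('i \<Rightarrow> 'a) \<Rightarrow> ennreal"
  assumes "prob_space M" "finite I" "k \<in> I"
    and h_meas: "\<And>j. j \<in> I \<Longrightarrow> h j \<in> borel_measurable (PiM I (\<lambda>_. M))"
    and h_equiv: "\<And>\<sigma> j z. bij_betw \<sigma> I I \<Longrightarrow> j \<in> I \<Longrightarrow> h j (\<lambda>i\<in>I. z (\<sigma> i)) = h (\<sigma> j) z"
  shows "(\<integral>\<^sup>+ z. (\<Sum>j\<in>I. h j z) \<partial>PiM I (\<lambda>_. M)) = of_nat (card I) * (\<integral>\<^sup>+ z. h k z \<partial>PiM I (\<lambda>_. M))"
proof -
  have same: "(\<integral>\<^sup>+ z. h j z \<partial>PiM I (\<lambda>_. M)) = (\<integral>\<^sup>+ z. h k z \<partial>PiM I (\<lambda>_. M))" if "j \<in> I" for j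
  proof -
    have bij: "bij_betw (Transposition.transpose j k) I I"
      using that \<open>k \<in> I\<close> by simp
    have "(\<integral>\<^sup>+ z. h k z \<partial>PiM I (\<lambda>_. M)) = (\<integral>\<^sup>+ z. h k (\<lambda>i\<in>I. z (Transposition.transpose j k i)) \<partial>PiM I (\<lambda>_. M))"
      using nn_integral_PiM_reindex[OF assms(1) bij h_meas[OF \<open>k \<in> I\<close>]] by simp
    also have "\<dots> = (\<integral>\<^sup>+ z. h j z \<partial>PiM I (\<lambda>_. M))"
      using that \<open>k \<in> I\<close> by (simp add: h_equiv)
    finally show ?thesis ..
  qed
  have "(\<integral>\<^sup>+ z. (\<Sum>j\<in>I. h j z) \<partial>PiM I (\<lambda>_. M)) = (\<Sum>j\<in>I. \<integral>\<^sup>+ z. h j z \<partial>PiM I (\<lambda>_. M))"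
    using h_meas by (rule nn_integral_sum)
  also have "\<dots> = of_nat (card I) * (\<integral>\<^sup>+ z. h k z \<partial>PiM I (\<lambda>_. M))"
    by (simp add: same)
  finally show ?thesis .
qed

lemma ereal_le_Sup_finite_iff:
  assumes "finite A"
  shows "ereal x \<le> Sup (ereal ` A) \<longleftrightarrow> (\<exists>a\<in>A. x \<le> a)"
proof (cases "A = {}")
  case False
  then have "Sup (ereal ` A) = Max (ereal ` A)"
    using assms by (simp add: cSup_eq_Max)
  then show ?thesis
    using assms False by (simp add: Max_ge_iff)
qed (simp add: bot_ereal_def)

lemma wF_test_loss:
  "wF n ws Ls Ss t (Ls (n+1))
     = (\<Sum>i=1..n+1. ws i * Ls i * (if Ss i \<le> t then 1 else 0)) / (\<Sum>i=1..n+1. ws i)"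
  unfolding wF_def by simp

definition oracle_selected :: "nat \<Rightarrow> (nat \<Rightarrow> real) \<Rightarrow> (nat \<Rightarrow> real) \<Rightarrow> (nat \<Rightarrow> real) \<Rightarrow> real \<Rightarrow> nat \<Rightarrow> bool" where
  "oracle_selected n ws Ls Ss \<gamma> i \<longleftrightarrow> ereal (Ss i) \<le> t_gamma n ws Ls Ss \<gamma> (Ls (n+1))"

definition oracle_mass :: "nat \<Rightarrow> (nat \<Rightarrow> real) \<Rightarrow> (nat \<Rightarrow> real) \<Rightarrow> (nat \<Rightarrow> real) \<Rightarrow> real \<Rightarrow> real" where
  "oracle_mass n ws Ls Ss \<gamma> = (\<Sum>i=1..n+1. if oracle_selected n ws Ls Ss \<gamma> i then ws i * Ls i else 0)"

definition oracle_share :: "nat \<Rightarrow> (nat \<Rightarrow> real) \<Rightarrow> (nat \<Rightarrow> real) \<Rightarrow> (nat \<Rightarrow> real) \<Rightarrow> real \<Rightarrow> nat \<Rightarrow> real" where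
  "oracle_share n ws Ls Ss \<gamma> j =
     (if oracle_selected n ws Ls Ss \<gamma> j then ws j * Ls j else 0) * (\<Sum>i=1..n+1. ws i)
       / oracle_mass n ws Ls Ss \<gamma>"

lemma oracle_selected_iff:
  "oracle_selected n ws Ls Ss \<gamma> i \<longleftrightarrow>
     (\<exists>j\<in>{1..n+1}. wF n ws Ls Ss (Ss j) (Ls (n+1)) \<le> \<gamma> \<and> Ss i \<le> Ss j)"
  unfolding oracle_selected_def t_gamma_def by (subst ereal_le_Sup_finite_iff) auto

lemma oracle_mass_nonneg:
  "(\<And>i. 0 \<le> ws i) \<Longrightarrow> (\<And>i. 0 \<le> Ls i) \<Longrightarrow> 0 \<le> oracle_mass n ws Ls Ss \<gamma>"
  unfolding oracle_mass_def by (intro sum_nonneg) auto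

lemma oracle_share_nonneg:
  "(\<And>i. 0 \<le> ws i) \<Longrightarrow> (\<And>i. 0 \<le> Ls i) \<Longrightarrow> 0 \<le> oracle_share n ws Ls Ss \<gamma> j"
  unfolding oracle_share_def
  by (intro divide_nonneg_nonneg mult_nonneg_nonneg sum_nonneg oracle_mass_nonneg) auto

lemma sum_oracle_share_le:
  assumes "\<And>i. 0 \<le> ws i"
  shows "(\<Sum>j=1..n+1. oracle_share n ws Ls Ss \<gamma> j) \<le> (\<Sum>i=1..n+1. ws i)"
proof -
  have "(\<Sum>j=1..n+1. oracle_share n ws Ls Ss \<gamma> j)
      = oracle_mass n ws Ls Ss \<gamma> * (\<Sum>i=1..n+1. ws i) / oracle_mass n ws Ls Ss \<gamma>"
    unfolding oracle_share_def oracle_mass_def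
    by (simp add: sum_divide_distrib[symmetric] sum_distrib_right[symmetric])
  also have "\<dots> \<le> (\<Sum>i=1..n+1. ws i)"
    using sum_nonneg[of "{1..n+1}" ws] assms by (cases "oracle_mass n ws Ls Ss \<gamma> = 0") auto
  finally show ?thesis .
qed

context
  fixes n :: nat and \<sigma> :: "nat \<Rightarrow> nat" and ws Ls Ss ws' Ls' Ss' :: "nat \<Rightarrow> real"
  assumes bij: "bij_betw \<sigma> {1..n+1} {1..n+1}"
    and reindexed: "\<And>i. i \<in> {1..n+1} \<Longrightarrow> ws' i = ws (\<sigma> i) \<and> Ls' i = Ls (\<sigma> i) \<and> Ss' i = Ss (\<sigma> i)"
begin

lemma sum_reindexed:
  "(\<Sum>i=1..n+1. f (ws' i) (Ls' i) (Ss' i)) = (\<Sum>i=1..n+1. f (ws i) (Ls i) (Ss i))"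
proof -
  have "(\<Sum>i=1..n+1. f (ws' i) (Ls' i) (Ss' i)) = (\<Sum>i=1..n+1. f (ws (\<sigma> i)) (Ls (\<sigma> i)) (Ss (\<sigma> i)))"
    using reindexed by (intro sum.cong) auto
  also have "\<dots> = (\<Sum>i=1..n+1. f (ws i) (Ls i) (Ss i))"
    using sum.reindex_bij_betw[OF bij, of "\<lambda>i. f (ws i) (Ls i) (Ss i)"] .
  finally show ?thesis .
qed

lemma t_gamma_test_loss_reindexed:
  "t_gamma n ws' Ls' Ss' \<gamma> (Ls' (n+1)) = t_gamma n ws Ls Ss \<gamma> (Ls (n+1))"
proof -
  have "Ss' ` {1..n+1} = Ss ` \<sigma> ` {1..n+1}"
    using reindexed by (auto simp: image_image intro!: image_cong)
  then have "Ss' ` {1..n+1} = Ss ` {1..n+1}"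
    using bij by (simp add: bij_betw_def)
  moreover have "wF n ws' Ls' Ss' t (Ls' (n+1)) = wF n ws Ls Ss t (Ls (n+1))" for t
    unfolding wF_test_loss
    using sum_reindexed[of "\<lambda>w l s. w * l * (if s \<le> t then 1 else 0)"] sum_reindexed[of "\<lambda>w l s. w"]
    by simp
  ultimately show ?thesis
    unfolding t_gamma_def by simp
qed

lemma oracle_selected_reindexed:
  "i \<in> {1..n+1} \<Longrightarrow> oracle_selected n ws' Ls' Ss' \<gamma> i = oracle_selected n ws Ls Ss \<gamma> (\<sigma> i)"
  unfolding oracle_selected_def t_gamma_test_loss_reindexed using reindexed by simp

lemma oracle_mass_reindexed:
  "oracle_mass n ws' Ls' Ss' \<gamma> = oracle_mass n ws Ls Ss \<gamma>"
proof -
  have "oracle_mass n ws' Ls' Ss' \<gamma>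
      = (\<Sum>i=1..n+1. (\<lambda>k. if oracle_selected n ws Ls Ss \<gamma> k then ws k * Ls k else 0) (\<sigma> i))"
    unfolding oracle_mass_def using reindexed oracle_selected_reindexed by (intro sum.cong) auto
  also have "\<dots> = oracle_mass n ws Ls Ss \<gamma>"
    unfolding oracle_mass_def by (rule sum.reindex_bij_betw[OF bij])
  finally show ?thesis .
qed

lemma oracle_share_reindexed:
  "j \<in> {1..n+1} \<Longrightarrow> oracle_share n ws' Ls' Ss' \<gamma> j = oracle_share n ws Ls Ss \<gamma> (\<sigma> j)"
  unfolding oracle_share_def oracle_mass_reindexed
  using oracle_selected_reindexed reindexed sum_reindexed[of "\<lambda>w l s. w"] by simp

end

definition oracle_evalue :: "nat \<Rightarrow> (nat \<Rightarrow> real) \<Rightarrow> (nat \<Rightarrow> real) \<Rightarrow> (nat \<Rightarrow> real) \<Rightarrow> real \<Rightarrow> ereal" where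
  "oracle_evalue n ws Ls Ss \<gamma> = e_ratio n ws Ls Ss \<gamma> (Ls (n+1))"

lemma e2ennreal_weighted_evalue_le_oracle_evalue:
  "0 \<le> Ls (n+1) \<Longrightarrow> Ls (n+1) \<le> 1 \<Longrightarrow>
     e2ennreal (weighted_evalue n ws Ls Ss \<gamma>) \<le> e2ennreal (oracle_evalue n ws Ls Ss \<gamma>)"
  unfolding weighted_evalue_def oracle_evalue_def by (auto intro!: e2ennreal_mono INF_lower)

lemma oracle_evalue_eq:
  "oracle_evalue n ws Ls Ss \<gamma> =
     ereal (if oracle_selected n ws Ls Ss \<gamma> (n+1) then \<Sum>i=1..n+1. ws i else 0)
       / ereal (oracle_mass n ws Ls Ss \<gamma>)"
proof -
  let ?sel = "oracle_selected n ws Ls Ss \<gamma>"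
  have "(\<Sum>i=1..n. ws i * Ls i * (if ?sel i then 1 else 0)) = (\<Sum>i=1..n. if ?sel i then ws i * Ls i else 0)"
    by (rule sum.cong) auto
  then have mass: "(\<Sum>i=1..n. ws i * Ls i * (if ?sel i then 1 else 0))
      + ws (n+1) * Ls (n+1) * (if ?sel (n+1) then 1 else 0) = oracle_mass n ws Ls Ss \<gamma>"
    unfolding oracle_mass_def by simp
  have "(if ?sel (n+1) then 1 else 0) * (\<Sum>i=1..n+1. ws i) = (if ?sel (n+1) then \<Sum>i=1..n+1. ws i else 0)"
    by simp
  with mass show ?thesis
    unfolding oracle_evalue_def e_ratio_def Let_def oracle_selected_def[symmetric] by simp
qed

lemma oracle_share_test_point:
  assumes ws: "\<And>i. 0 \<le> ws i" and Ls: "\<And>i. 0 \<le> Ls i"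
  shows "ennreal (ws (n+1)) * (ennreal (Ls (n+1)) * e2ennreal (oracle_evalue n ws Ls Ss \<gamma>))
           = ennreal (oracle_share n ws Ls Ss \<gamma> (n+1))"
proof (cases "oracle_selected n ws Ls Ss \<gamma> (n+1)")
  case True
  let ?W = "\<Sum>i=1..n+1. ws i" and ?D = "oracle_mass n ws Ls Ss \<gamma>"
  have "ws (n+1) * Ls (n+1) = (if oracle_selected n ws Ls Ss \<gamma> (n+1) then ws (n+1) * Ls (n+1) else 0)"
    using True by simp
  also have "\<dots> \<le> ?D"
    unfolding oracle_mass_def by (rule member_le_sum) (use ws Ls in auto)
  finally have test_le_D: "ws (n+1) * Ls (n+1) \<le> ?D" .
  show ?thesis
  proof (cases "?D = 0")
    case True
    then have "ws (n+1) = 0 \<or> Ls (n+1) = 0"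
      using test_le_D mult_nonneg_nonneg[OF ws Ls] by (metis antisym mult_eq_0_iff)
    then show ?thesis
      using \<open>?D = 0\<close> by (auto simp: oracle_share_def)
  next
    case False
    then have "oracle_evalue n ws Ls Ss \<gamma> = ereal (?W / ?D)"
      unfolding oracle_evalue_eq using True by simp
    then show ?thesis
      using True ws Ls oracle_mass_nonneg[of ws Ls n Ss \<gamma>] sum_nonneg[of "{1..n+1}" ws]
      by (simp add: oracle_share_def e2ennreal_ereal ennreal_mult[symmetric] mult.assoc)
  qed
next
  case False
  then have "oracle_evalue n ws Ls Ss \<gamma> = 0"
    unfolding oracle_evalue_eq by simp
  then show ?thesis
    using False by (simp add: oracle_share_def)
qed

context
  fixes M :: "'a measure" and ws Ls Ss :: "'a \<Rightarrow> nat \<Rightarrow> real" and n :: nat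
  assumes [measurable]: "\<And>i. i \<in> {1..n+1} \<Longrightarrow> (\<lambda>x. ws x i) \<in> borel_measurable M"
    "\<And>i. i \<in> {1..n+1} \<Longrightarrow> (\<lambda>x. Ls x i) \<in> borel_measurable M"
    "\<And>i. i \<in> {1..n+1} \<Longrightarrow> (\<lambda>x. Ss x i) \<in> borel_measurable M"
begin

lemma pred_oracle_selected [measurable]:
  "i \<in> {1..n+1} \<Longrightarrow> Measurable.pred M (\<lambda>x. oracle_selected n (ws x) (Ls x) (Ss x) \<gamma> i)"
  unfolding oracle_selected_iff wF_test_loss by measurable

lemma borel_measurable_oracle_share:
  "j \<in> {1..n+1} \<Longrightarrow> (\<lambda>x. oracle_share n (ws x) (Ls x) (Ss x) \<gamma> j) \<in> borel_measurable M"
  unfolding oracle_share_def oracle_mass_def by measurable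

lemma borel_measurable_oracle_evalue:
  "(\<lambda>x. oracle_evalue n (ws x) (Ls x) (Ss x) \<gamma>) \<in> borel_measurable M"
  unfolding oracle_evalue_eq oracle_mass_def by measurable

end

definition oracle_share_data ::
  "('x \<Rightarrow> real) \<Rightarrow> ('x \<Rightarrow> real) \<Rightarrow> ('x \<Rightarrow> 'y \<Rightarrow> real) \<Rightarrow> nat \<Rightarrow> real \<Rightarrow> (nat \<Rightarrow> 'x \<times> 'y) \<Rightarrow> nat \<Rightarrow> real" where
  "oracle_share_data w s Lf n \<gamma> z j =
     oracle_share n (\<lambda>i. w (fst (z i))) (\<lambda>i. Lf (fst (z i)) (snd (z i))) (\<lambda>i. s (fst (z i))) \<gamma> j"

lemma nn_integral_oracle_share_data_le_1:
  fixes P :: "('x \<times> 'y) measure"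
  assumes P: "prob_space P"
    and [measurable]: "(\<lambda>z. w (fst z)) \<in> borel_measurable P" "(\<lambda>z. s (fst z)) \<in> borel_measurable P"
      "(\<lambda>z. Lf (fst z) (snd z)) \<in> borel_measurable P"
    and w: "\<And>x. 0 \<le> w x" and Lf: "\<And>x y. 0 \<le> Lf x y"
    and w_normalized: "(\<integral>\<^sup>+ z. ennreal (w (fst z)) \<partial>P) = 1"
  shows "(\<integral>\<^sup>+ z. ennreal (oracle_share_data w s Lf n \<gamma> z (n+1)) \<partial>PiM {1..n+1} (\<lambda>_. P)) \<le> 1"
proof -
  let ?I = "{1..n+1}" and ?P = "PiM {1..n+1} (\<lambda>_. P)"
  define h where "h j z = ennreal (oracle_share_data w s Lf n \<gamma> z j)" for j z
  have h_meas: "h j \<in> borel_measurable ?P" if "j \<in> ?I" for j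
    unfolding h_def oracle_share_data_def
    using that by (intro measurable_compose[OF borel_measurable_oracle_share measurable_ennreal]) auto
  have h_equiv: "h j (\<lambda>i\<in>?I. z (\<sigma> i)) = h (\<sigma> j) z" if "bij_betw \<sigma> ?I ?I" "j \<in> ?I" for \<sigma> j z
    unfolding h_def oracle_share_data_def using that
    by (subst oracle_share_reindexed[where \<sigma> = \<sigma>]) auto
  have "(\<integral>\<^sup>+ z. (\<Sum>j\<in>?I. h j z) \<partial>?P) = of_nat (n+1) * (\<integral>\<^sup>+ z. h (n+1) z \<partial>?P)"
    using nn_integral_PiM_sum_equivariant[OF P finite_atLeastAtMost _ h_meas h_equiv, where k = "n+1"]
    by simp
  moreover have "(\<integral>\<^sup>+ z. (\<Sum>j\<in>?I. h j z) \<partial>?P) \<le> (\<integral>\<^sup>+ z. (\<Sum>i\<in>?I. ennreal (w (fst (z i)))) \<partial>?P)"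
  proof (intro nn_integral_mono)
    fix z
    have "(\<Sum>j\<in>?I. h j z) = ennreal (\<Sum>j\<in>?I. oracle_share_data w s Lf n \<gamma> z j)"
      unfolding h_def oracle_share_data_def using w Lf
      by (intro sum_ennreal oracle_share_nonneg) auto
    also have "\<dots> \<le> ennreal (\<Sum>i\<in>?I. w (fst (z i)))"
      unfolding oracle_share_data_def using w by (intro ennreal_leI sum_oracle_share_le)
    also have "\<dots> = (\<Sum>i\<in>?I. ennreal (w (fst (z i))))"
      by (rule sum_ennreal[symmetric]) (rule w)
    finally show "(\<Sum>j\<in>?I. h j z) \<le> (\<Sum>i\<in>?I. ennreal (w (fst (z i))))" .
  qed
  moreover have "(\<integral>\<^sup>+ z. (\<Sum>i\<in>?I. ennreal (w (fst (z i)))) \<partial>?P) = of_nat (n+1)"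
    using nn_integral_PiM_sum_component[OF P, of ?I "\<lambda>z. ennreal (w (fst z))"] w_normalized by simp
  ultimately have "of_nat (n+1) * (\<integral>\<^sup>+ z. h (n+1) z \<partial>?P) \<le> of_nat (n+1) * 1"
    by simp
  then show ?thesis
    unfolding h_def by (subst (asm) ennreal_mult_le_mult_iff) auto
qed

theorem theorem6p1:
  fixes P Q :: "('x \<times> 'y) measure"
    and w :: "'x \<Rightarrow> real" and s :: "'x \<Rightarrow> real" and Lf :: "'x \<Rightarrow> 'y \<Rightarrow> real"
    and n :: nat and \<gamma> :: real
  assumes "prob_space P"
    and "prob_space Q"
    and "(\<lambda>z. w (fst z)) \<in> borel_measurable P"
    and "\<And>x. 0 \<le> w x"
    and "Q = density P (\<lambda>z. ennreal (w (fst z)))"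
    and "(\<lambda>z. s (fst z)) \<in> borel_measurable P"
    and "(\<lambda>z. Lf (fst z) (snd z)) \<in> borel_measurable P"
    and "\<And>x y. 0 \<le> Lf x y \<and> Lf x y \<le> 1"
    and "0 < \<gamma>" and "\<gamma> < 1"
  shows "(\<integral>\<^sup>+ z. ennreal (Lf (fst (z (n+1))) (snd (z (n+1))))
                 * e2ennreal (evalue_data w s Lf n \<gamma> z)
            \<partial>(\<Pi>\<^sub>M i\<in>{1..n+1}. (if i = n+1 then Q else P))) \<le> 1"
proof -
  note P = assms(1) and Q = assms(2) and w = assms(4) and Q_def = assms(5) and Lf = assms(8)
  note [measurable] = assms(3,6,7)
  let ?Q = "\<Pi>\<^sub>M i\<in>{1..n+1}. (if i = n+1 then Q else P)" and ?P = "PiM {1..n+1} (\<lambda>_. P)"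
    and ?L = "\<lambda>z. Lf (fst (z (n+1))) (snd (z (n+1)))"
  define E\<^sub>o where "E\<^sub>o z = oracle_evalue n (\<lambda>i. w (fst (z i))) (\<lambda>i. Lf (fst (z i)) (snd (z i))) (\<lambda>i. s (fst (z i))) \<gamma>" for z
  have E\<^sub>o_meas [measurable]: "E\<^sub>o \<in> borel_measurable ?P"
    unfolding E\<^sub>o_def by (rule borel_measurable_oracle_evalue) measurable
  have w_normalized: "(\<integral>\<^sup>+ z. ennreal (w (fst z)) \<partial>P) = 1"
    using prob_space.emeasure_space_1[OF Q] by (simp add: Q_def emeasure_density)
  have Q_product: "?Q = density ?P (\<lambda>z. ennreal (w (fst (z (n+1)))))"
    using P Q unfolding Q_def by (intro PiM_density_component) auto
  \<comment> \<open>The e-value need not be measurable: bound it by the oracle e-value before changing measure.\<close>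
  have "(\<integral>\<^sup>+ z. ennreal (?L z) * e2ennreal (evalue_data w s Lf n \<gamma> z) \<partial>?Q)
      \<le> (\<integral>\<^sup>+ z. ennreal (?L z) * e2ennreal (E\<^sub>o z) \<partial>?Q)"
    unfolding evalue_data_def E\<^sub>o_def using Lf
    by (intro nn_integral_mono mult_left_mono e2ennreal_weighted_evalue_le_oracle_evalue) auto
  also have "\<dots> = (\<integral>\<^sup>+ z. ennreal (w (fst (z (n+1)))) * (ennreal (?L z) * e2ennreal (E\<^sub>o z)) \<partial>?P)"
    unfolding Q_product by (rule nn_integral_density) measurable
  also have "\<dots> = (\<integral>\<^sup>+ z. ennreal (oracle_share_data w s Lf n \<gamma> z (n+1)) \<partial>?P)"
    unfolding E\<^sub>o_def oracle_share_data_def using w Lf by (intro nn_integral_cong oracle_share_test_point) auto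
  also have "\<dots> \<le> 1"
    using P w Lf w_normalized by (intro nn_integral_oracle_share_data_le_1) auto
  finally show ?thesis .
qed

end
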